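(* Let $p\ge 1$ and $q\ge 3$ be integers. If $H$ is a graph that is $Q$-cospectral with the jellyfish graph $JFG(p,q)$, then $\det(Q(H))\in\{0,4\}$.
   Context: All graphs are finite and simple. The jellyfish graph $JFG(p,q)$ is obtained from a cycle $C_q$ and $q$ copies of the star $K_{1,p}$ by identifying each vertex of $C_q$ with the center (vertex of maximum degree) of a distinct copy of $K_{1,p}$. The signless Laplacian matrix is $Q(G)=A(G)+D(G)$, with $A(G)$ the adjacency matrix and $D(G)$ the diagonal degree matrix. Two graphs are $Q$-cospectral if their signless Laplacian matrices have the same spectrum. *)

theory Defs
  imports "Jordan_Normal_Form.Determinant" "Jordan_Normal_Form.Char_Poly" "HOL-Computational_Algebra.Fundamental_Theorem_Algebra"
begin

definition simple_graph :: "nat \<Rightarrow> (nat \<Rightarrow> nat \<Rightarrow> bool) \<Rightarrow> bool" where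
  "simple_graph n E \<longleftrightarrow> (\<forall>i<n. \<forall>j<n. E i j = E j i) \<and> (\<forall>i<n. \<not> E i i)"

definition degree :: "nat \<Rightarrow> (nat \<Rightarrow> nat \<Rightarrow> bool) \<Rightarrow> nat \<Rightarrow> nat" where
  "degree n E i = card {j. j < n \<and> E i j}"

definition adjacency_matrix :: "nat \<Rightarrow> (nat \<Rightarrow> nat \<Rightarrow> bool) \<Rightarrow> real mat" where
  "adjacency_matrix n E = mat n n (\<lambda>(i, j). if E i j then 1 else 0)"

definition degree_matrix :: "nat \<Rightarrow> (nat \<Rightarrow> nat \<Rightarrow> bool) \<Rightarrow> real mat" where
  "degree_matrix n E = mat n n (\<lambda>(i, j). if i = j then real (degree n E i) else 0)"

definition signless_laplacian :: "nat \<Rightarrow> (nat \<Rightarrow> nat \<Rightarrow> bool) \<Rightarrow> real mat" where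
  "signless_laplacian n E = adjacency_matrix n E + degree_matrix n E"

definition mat_spectrum :: "real mat \<Rightarrow> complex multiset" where
  "mat_spectrum M = proots (char_poly (map_mat complex_of_real M))"

definition Q_cospectral ::
  "nat \<Rightarrow> (nat \<Rightarrow> nat \<Rightarrow> bool) \<Rightarrow> nat \<Rightarrow> (nat \<Rightarrow> nat \<Rightarrow> bool) \<Rightarrow> bool" where
  "Q_cospectral n E m F \<longleftrightarrow>
     mat_spectrum (signless_laplacian n E) = mat_spectrum (signless_laplacian m F)"

text \<open>Jellyfish graph JFG(p,q): cycle vertices 0..q-1 (i adjacent to (i+1) mod q);
  pendant vertices q + i*p + k (k < p) attached to cycle vertex i.
  Order q*(p+1).\<close>
definition jfg_order :: "nat \<Rightarrow> nat \<Rightarrow> nat" where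
  "jfg_order p q = q * (p + 1)"

definition jfg_adj :: "nat \<Rightarrow> nat \<Rightarrow> nat \<Rightarrow> nat \<Rightarrow> bool" where
  "jfg_adj p q u v \<longleftrightarrow>
     (u < q \<and> v < q \<and> (v = (u + 1) mod q \<or> u = (v + 1) mod q)) \<or>
     (u < q \<and> q \<le> v \<and> v < jfg_order p q \<and> (v - q) div p = u) \<or>
     (v < q \<and> q \<le> u \<and> u < jfg_order p q \<and> (u - q) div p = v)"

end

theory Submission
  imports Defs
begin

text \<open>Write Q(G) = N N^T with N the vertex-edge incidence matrix. JFG(p, q) is unicyclic,
  so N is square, and labelling every edge by one of its ends makes N block triangular, with
  the incidence matrix of the cycle C_q and an identity as diagonal blocks. Hence
  det Q(JFG(p, q)) = (1 + (-1)^(q-1))^2, which is 0 or 4. As det Q is the product of the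
  Q-eigenvalues, it is shared by every Q-cospectral graph.\<close>

lemma det_eq_prod_proots_char_poly:
  fixes A :: "complex mat"
  assumes A: "A \<in> carrier_mat n n"
  shows "det A = prod_mset (proots (char_poly A))"
proof -
  obtain as where cp: "char_poly A = (\<Prod>a\<leftarrow>as. [:- a, 1:])" and len: "length as = n"
    using char_poly_factorized[OF A] by blast
  have proots_eq: "proots (char_poly A) = mset as"
  proof -
    have "proots (char_poly A) = (\<Sum>p\<leftarrow>map (\<lambda>a. [:- a, 1:]) as. proots p)"
      unfolding cp by (subst proots_prod_list[symmetric]) (auto simp: o_def)
    also have "\<dots> = mset as" by (induction as) auto
    finally show ?thesis .
  qed
  have "(-1) ^ n * det A = det ((-1) \<cdot>\<^sub>m A)"
    using det_smult[of "-1" A] A by simp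
  also have "(-1) \<cdot>\<^sub>m A = - char_matrix A 0"
    using A by (intro eq_matI) (auto simp: char_matrix_def)
  also have "det \<dots> = poly (char_poly A) 0"
    by (rule char_poly_matrix[OF A, symmetric])
  also have "\<dots> = (\<Prod>a\<leftarrow>as. - a)"
    unfolding cp by (induction as) auto
  also have "\<dots> = (-1) ^ n * prod_list as"
    unfolding len[symmetric] by (induction as) auto
  finally have "det A = prod_list as" by simp
  then show ?thesis
    unfolding proots_eq by (simp add: prod_mset_prod_list)
qed

lemma of_real_det_eq_prod_mat_spectrum:
  assumes "M \<in> carrier_mat n n"
  shows "complex_of_real (det M) = prod_mset (mat_spectrum M)"
  unfolding mat_spectrum_def of_real_hom.hom_det[symmetric]
  by (rule det_eq_prod_proots_char_poly[of _ n]) (use assms in auto)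

lemma signless_laplacian_carrier: "signless_laplacian n E \<in> carrier_mat n n"
  by (simp add: signless_laplacian_def adjacency_matrix_def degree_matrix_def)

lemma Q_cospectral_det_eq:
  assumes "Q_cospectral n E m F"
  shows "det (signless_laplacian n E) = det (signless_laplacian m F)"
proof -
  have "complex_of_real (det (signless_laplacian n E)) =
        complex_of_real (det (signless_laplacian m F))"
    using assms unfolding Q_cospectral_def
    by (simp add: of_real_det_eq_prod_mat_spectrum[OF signless_laplacian_carrier])
  then show ?thesis by simp
qed

text \<open>Graphs in which every vertex e owns exactly one edge, joining e to f e; column e
  is the incidence vector of that edge.\<close>

definition incidence_mat :: "nat \<Rightarrow> (nat \<Rightarrow> nat) \<Rightarrow> real mat" where
  "incidence_mat n f = mat n n (\<lambda>(u, e). if u = e \<or> u = f e then 1 else 0)"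

lemma incidence_mat_carrier: "incidence_mat n f \<in> carrier_mat n n"
  by (simp add: incidence_mat_def)

lemma incidence_mult_transpose_entry:
  assumes "i < n" "j < n"
  shows "(incidence_mat n f * (incidence_mat n f)\<^sup>T) $$ (i, j) =
    real (card {k. k < n \<and> (i = k \<or> i = f k) \<and> (j = k \<or> j = f k)})"
proof -
  have "(incidence_mat n f * (incidence_mat n f)\<^sup>T) $$ (i, j) =
      (\<Sum>k<n. if (i = k \<or> i = f k) \<and> (j = k \<or> j = f k) then 1 else 0)"
    using assms by (auto simp: incidence_mat_def scalar_prod_def lessThan_atLeast0 intro!: sum.cong)
  also have "\<dots> = real (card {k. k < n \<and> (i = k \<or> i = f k) \<and> (j = k \<or> j = f k)})"
    by (simp add: sum.If_cases Int_def)
  finally show ?thesis .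
qed

lemma signless_laplacian_eq_incidence_mult_transpose:
  assumes f_lt: "\<And>u. u < n \<Longrightarrow> f u < n"
    and f_neq: "\<And>u. u < n \<Longrightarrow> f u \<noteq> u"
    and f_f_neq: "\<And>u. u < n \<Longrightarrow> f (f u) \<noteq> u"
    and adj: "\<And>u v. u < n \<Longrightarrow> v < n \<Longrightarrow> E u v \<longleftrightarrow> f u = v \<or> f v = u"
  shows "signless_laplacian n E = incidence_mat n f * (incidence_mat n f)\<^sup>T"
proof (rule eq_matI)
  fix i j
  assume "i < dim_row (incidence_mat n f * (incidence_mat n f)\<^sup>T)"
    and "j < dim_col (incidence_mat n f * (incidence_mat n f)\<^sup>T)"
  then have i: "i < n" and j: "j < n"
    by (simp_all add: incidence_mat_def)
  let ?common = "{k. k < n \<and> (i = k \<or> i = f k) \<and> (j = k \<or> j = f k)}"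
  have Q_entry: "signless_laplacian n E $$ (i, j) =
      (if E i j then 1 else 0) + (if i = j then real (degree n E i) else 0)"
    using i j by (simp add: signless_laplacian_def adjacency_matrix_def degree_matrix_def)
  show "signless_laplacian n E $$ (i, j) = (incidence_mat n f * (incidence_mat n f)\<^sup>T) $$ (i, j)"
  proof (cases "i = j")
    case True
    let ?children = "{k. k < n \<and> f k = i}"
    have "?common = insert i ?children" and "{k. k < n \<and> E i k} = insert (f i) ?children"
      using True i f_lt f_neq adj[OF i] by auto
    moreover have "i \<notin> ?children" and "f i \<notin> ?children"
      using f_neq[OF i] f_f_neq[OF i] by auto
    ultimately have "card ?common = degree n E i"
      by (simp add: degree_def)
    moreover have "\<not> E i i"
      using adj[OF i i] f_neq[OF i] by simp
    ultimately show ?thesis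
      using True i Q_entry incidence_mult_transpose_entry by simp
  next
    case False
    have "?common = (if f i = j then {i} else {}) \<union> (if f j = i then {j} else {})"
      using False i j by auto
    moreover have "\<not> (f i = j \<and> f j = i)"
      using f_f_neq[OF i] by auto
    ultimately have "card ?common = (if E i j then 1 else 0)"
      using adj[OF i j] False by auto
    then show ?thesis
      using False i j Q_entry incidence_mult_transpose_entry by simp
  qed
qed (simp_all add: signless_laplacian_carrier[THEN carrier_matD(1)]
    signless_laplacian_carrier[THEN carrier_matD(2)] incidence_mat_def)

lemma det_mult_transpose_self:
  fixes A :: "'a :: comm_ring_1 mat"
  assumes "A \<in> carrier_mat n n"
  shows "det (A * A\<^sup>T) = (det A)\<^sup>2"
  using assms by (simp add: det_mult[of _ n] det_transpose power2_eq_square)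

lemma det_unit_lower_triangular:
  assumes "A \<in> carrier_mat n n"
    and "\<And>i. i < n \<Longrightarrow> A $$ (i, i) = 1"
    and "\<And>i j. i < j \<Longrightarrow> j < n \<Longrightarrow> A $$ (i, j) = 0"
  shows "det A = 1"
proof -
  have "diag_mat A = replicate n 1"
    using assms(1,2) by (intro nth_equalityI) (auto simp: diag_mat_def)
  then show ?thesis
    using assms by (simp add: det_lower_triangular[of n])
qed

lemma det_unit_upper_triangular:
  assumes "A \<in> carrier_mat n n"
    and "\<And>i. i < n \<Longrightarrow> A $$ (i, i) = 1"
    and "\<And>i j. j < i \<Longrightarrow> i < n \<Longrightarrow> A $$ (i, j) = 0"
  shows "det A = 1"
proof -
  have "det A\<^sup>T = 1"
    by (rule det_unit_lower_triangular[of _ n]) (use assms in auto)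
  then show ?thesis
    using det_transpose[OF assms(1)] by simp
qed

text \<open>Expanding along row 0, the two nonzero entries sit in columns 0 and q - 1,
  and both minors are unitriangular.\<close>

lemma det_cycle_incidence:
  assumes q: "2 \<le> q"
  shows "det (incidence_mat q (\<lambda>e. Suc e mod q)) = 1 + (-1) ^ (q - 1)"
proof -
  let ?C = "incidence_mat q (\<lambda>e. Suc e mod q)"
  have C: "?C \<in> carrier_mat q q" by (rule incidence_mat_carrier)
  have row0: "?C $$ (0, j) = (if j = 0 \<or> j = q - 1 then 1 else 0)" if "j < q" for j
  proof -
    have "(0 = (j + 1) mod q) \<longleftrightarrow> j = q - 1"
      using that by (cases "j + 1 < q") auto
    then show ?thesis
      using that by (auto simp: incidence_mat_def)
  qed
  have "det ?C = (\<Sum>j<q. ?C $$ (0, j) * cofactor ?C 0 j)"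
    using q by (intro laplace_expansion_row[OF C]) simp
  also have "\<dots> = (\<Sum>j\<in>{0, q - 1}. cofactor ?C 0 j)"
    using q row0 by (intro sum.mono_neutral_cong_right) auto
  also have "\<dots> = cofactor ?C 0 0 + cofactor ?C 0 (q - 1)"
    using q by simp
  also have "cofactor ?C 0 0 = 1"
  proof -
    have "det (mat_delete ?C 0 0) = 1"
    proof (rule det_unit_lower_triangular[OF mat_delete_carrier[OF C]])
      fix i j
      assume "i < j" "j < q - 1"
      moreover have "Suc i \<noteq> (Suc j + 1) mod q"
        using \<open>i < j\<close> \<open>j < q - 1\<close> by (cases "Suc j + 1 = q") auto
      ultimately show "mat_delete ?C 0 0 $$ (i, j) = 0"
        by (simp add: mat_delete_def incidence_mat_def)
    qed (simp add: mat_delete_def incidence_mat_def)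
    then show ?thesis by (simp add: cofactor_def)
  qed
  also have "cofactor ?C 0 (q - 1) = (-1) ^ (q - 1)"
  proof -
    have "det (mat_delete ?C 0 (q - 1)) = 1"
      by (rule det_unit_upper_triangular[OF mat_delete_carrier[OF C]])
        (auto simp: mat_delete_def incidence_mat_def)
    then show ?thesis by (simp add: cofactor_def)
  qed
  finally show ?thesis .
qed

definition jfg_mate :: "nat \<Rightarrow> nat \<Rightarrow> nat \<Rightarrow> nat" where
  "jfg_mate p q e = (if e < q then Suc e mod q else (e - q) div p)"

lemma jfg_mate_lt:
  assumes "e < jfg_order p q"
  shows "jfg_mate p q e < q"
proof (cases "e < q")
  case False
  then have "e - q < q * p"
    using assms by (simp add: jfg_order_def algebra_simps)
  then show ?thesis
    using False by (simp add: jfg_mate_def less_mult_imp_div_less)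
qed (simp add: jfg_mate_def)

lemma jfg_mate_neq:
  assumes "2 \<le> q" "e < jfg_order p q"
  shows "jfg_mate p q e \<noteq> e"
proof (cases "e < q")
  case True
  then show ?thesis
    using assms by (cases "Suc e = q") (auto simp: jfg_mate_def)
next
  case False
  then show ?thesis
    using jfg_mate_lt[OF assms(2)] by simp
qed

lemma jfg_mate_mate_neq:
  assumes "3 \<le> q" "e < jfg_order p q"
  shows "jfg_mate p q (jfg_mate p q e) \<noteq> e"
proof (cases "e < q")
  case True
  then have "jfg_mate p q (jfg_mate p q e) = (e + 2) mod q"
    by (simp add: jfg_mate_def mod_simps)
  moreover have "(e + 2) mod q \<noteq> e"
    using True assms(1) by (cases "e + 2 < q") (auto simp: mod_if)
  ultimately show ?thesis by simp
next
  case False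
  have "jfg_mate p q e < jfg_order p q"
    using jfg_mate_lt[OF assms(2)] by (simp add: jfg_order_def)
  then show ?thesis
    using False jfg_mate_lt by fastforce
qed

lemma jfg_adj_iff_mate:
  assumes "2 \<le> q" "u < jfg_order p q" "v < jfg_order p q"
  shows "jfg_adj p q u v \<longleftrightarrow> jfg_mate p q u = v \<or> jfg_mate p q v = u"
  using assms jfg_mate_neq[OF assms(1,2)] jfg_mate_neq[OF assms(1,3)]
    jfg_mate_lt[OF assms(2)] jfg_mate_lt[OF assms(3)]
  unfolding jfg_adj_def by (auto simp: jfg_mate_def)

lemma incidence_jfg_eq_four_block:
  "incidence_mat (jfg_order p q) (jfg_mate p q) =
    four_block_mat (incidence_mat q (\<lambda>e. Suc e mod q))
      (mat q (q * p) (\<lambda>(u, k). if u = k div p then 1 else 0)) (0\<^sub>m (q * p) q) (1\<^sub>m (q * p))"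
  by (intro eq_matI)
    (auto simp: jfg_order_def incidence_mat_def jfg_mate_def less_mult_imp_div_less algebra_simps)

lemma det_incidence_jfg:
  assumes "2 \<le> q"
  shows "det (incidence_mat (jfg_order p q) (jfg_mate p q)) = 1 + (-1) ^ (q - 1)"
  unfolding incidence_jfg_eq_four_block
  by (subst det_four_block_mat_lower_left_zero[of _ q _ "q * p"])
    (simp_all add: incidence_mat_carrier det_cycle_incidence[OF assms])

lemma det_signless_laplacian_jfg:
  assumes "3 \<le> q"
  shows "det (signless_laplacian (jfg_order p q) (jfg_adj p q)) = (1 + (-1) ^ (q - 1))\<^sup>2"
proof -
  let ?N = "incidence_mat (jfg_order p q) (jfg_mate p q)"
  have "signless_laplacian (jfg_order p q) (jfg_adj p q) = ?N * ?N\<^sup>T"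
  proof (rule signless_laplacian_eq_incidence_mult_transpose)
    fix u
    assume u: "u < jfg_order p q"
    show "jfg_mate p q u < jfg_order p q"
      using jfg_mate_lt[OF u] by (simp add: jfg_order_def)
    show "jfg_mate p q u \<noteq> u"
      using assms jfg_mate_neq[OF _ u] by simp
    show "jfg_mate p q (jfg_mate p q u) \<noteq> u"
      using jfg_mate_mate_neq[OF assms u] .
  next
    fix u v
    assume "u < jfg_order p q" "v < jfg_order p q"
    then show "jfg_adj p q u v \<longleftrightarrow> jfg_mate p q u = v \<or> jfg_mate p q v = u"
      using assms by (intro jfg_adj_iff_mate) simp_all
  qed
  then show ?thesis
    using assms by (simp add: det_mult_transpose_self[OF incidence_mat_carrier] det_incidence_jfg)
qed

theorem lemma3p7:
  fixes p q m :: nat and F :: "nat \<Rightarrow> nat \<Rightarrow> bool"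
  assumes "p \<ge> 1" and "q \<ge> 3"
    and "simple_graph m F"
    and "Q_cospectral m F (jfg_order p q) (jfg_adj p q)"
  shows "det (signless_laplacian m F) \<in> {0, 4}"
proof -
  have "det (signless_laplacian m F) = (1 + (-1) ^ (q - 1))\<^sup>2"
    using Q_cospectral_det_eq[OF assms(4)] det_signless_laplacian_jfg[OF assms(2)] by simp
  then show ?thesis
    by (cases "even (q - 1)") auto
qed

end
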